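(* Let $\beta\in(-\infty,0)\cup(0,1]$, $G_\beta(u)=\frac{\beta}{|\beta|}u^\beta$, and $u_0\in\ell^\infty_+(\mathbb{Z})$ with $0<\delta\le u_0\le C$. Then there exists a solution $u:[0,\infty)\to\ell^\infty_+(\mathbb{Z})$ of $\partial_tu=\Delta G_\beta(u)$, $u(0)=u_0$, with $\delta\le u(t,\cdot)\le C$ for all $t\ge0$.
   Context: $\Delta v(k)=v(k-1)-2v(k)+v(k+1)$. A solution is a map $u\in C^0([0,\infty);\ell^\infty_+(\mathbb{Z}))$ with $u(0)=u_0$ such that for each $k$, $u(\cdot,k)\in C^1((0,\infty);(0,\infty))$ and $\frac{d}{dt}u(t,k)=\Delta G_\beta(u)(t,k)$ for all $t>0$. *)

theory Defs
  imports "HOL-Analysis.Analysis"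
begin

definition linfty_plus :: "(int \<Rightarrow> real) \<Rightarrow> bool" where
  "linfty_plus v \<longleftrightarrow> bounded (range v) \<and> (\<forall>k. 0 \<le> v k)"

definition Gbeta :: "real \<Rightarrow> real \<Rightarrow> real" where
  "Gbeta \<beta> x = (\<beta> / \<bar>\<beta>\<bar>) * x powr \<beta>"

definition dlap :: "(int \<Rightarrow> real) \<Rightarrow> int \<Rightarrow> real" where
  "dlap v k = v (k - 1) - 2 * v k + v (k + 1)"

definition is_solution :: "real \<Rightarrow> (int \<Rightarrow> real) \<Rightarrow> (real \<Rightarrow> int \<Rightarrow> real) \<Rightarrow> bool" where
  "is_solution \<beta> u0 u \<longleftrightarrow>
     (\<forall>t\<ge>0. linfty_plus (u t)) \<and>
     (\<forall>t0\<ge>0. \<forall>e>0. \<exists>d>0. \<forall>t\<ge>0. \<bar>t - t0\<bar> < d \<longrightarrow> (\<forall>k. \<bar>u t k - u t0 k\<bar> \<le> e)) \<and>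
     u 0 = u0 \<and>
     (\<forall>k. (\<forall>t>0. u t k > 0) \<and>
          (\<lambda>s. u s k) differentiable_on {0<..} \<and>
          continuous_on {0<..} (\<lambda>t. deriv (\<lambda>s. u s k) t) \<and>
          (\<forall>t>0. ((\<lambda>s. u s k) has_real_derivative dlap (\<lambda>j. Gbeta \<beta> (u t j)) k) (at t)))"

end

theory Submission
  imports Defs
begin

text \<open>Since \<beta> \<le> 1, G is increasing and L-Lipschitz on [\<delta>, \<infinity>) with L = |\<beta>| \<delta>^(\<beta> - 1).
  Adding M u with M = 2 L to both sides turns the equation into u' + M u = Phi(u), where
  Phi(v)(k) = G(v(k-1)) + G(v(k+1)) + (M v(k) - 2 G(v(k))) is nondecreasing in every entry and
  therefore maps sequences with values in [\<delta>, C] to sequences with values in [M \<delta>, M C].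
  Consequently the Duhamel map T v (t) = exp(-M t) (u0 + \<integral>_0^t exp(M s) Phi(v(s)) ds) preserves
  the paths with values in [\<delta>, C] that are M (C - \<delta>)-Lipschitz in time, and it contracts by the
  factor 2/3 in the sup norm weighted by exp(-4 L t). The Picard iterates starting from u0
  thus converge locally uniformly to a fixed point of T, which solves the equation.\<close>

lemma Gbeta_has_real_derivative:
  assumes "\<beta> \<noteq> 0" "0 < x"
  shows "(Gbeta \<beta> has_real_derivative \<bar>\<beta>\<bar> * x powr (\<beta> - 1)) (at x)"
proof -
  have "((\<lambda>x. \<beta> / \<bar>\<beta>\<bar> * x powr \<beta>) has_real_derivative \<beta> / \<bar>\<beta>\<bar> * (\<beta> * x powr (\<beta> - 1))) (at x)"
    by (intro DERIV_cmult has_real_derivative_powr \<open>0 < x\<close>)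
  moreover have "\<beta> / \<bar>\<beta>\<bar> * (\<beta> * x powr (\<beta> - 1)) = \<bar>\<beta>\<bar> * x powr (\<beta> - 1)"
    using assms(1) by (auto simp: abs_if field_simps)
  ultimately show ?thesis
    unfolding Gbeta_def[abs_def] by simp
qed

lemma continuous_on_Gbeta: "\<beta> \<noteq> 0 \<Longrightarrow> continuous_on {0<..} (Gbeta \<beta>)"
  by (intro continuous_at_imp_continuous_on ballI) (auto intro: DERIV_isCont Gbeta_has_real_derivative)

lemma Gbeta_mono_lipschitz:
  assumes "\<beta> \<noteq> 0" "\<beta> \<le> 1" "0 < \<delta>" "\<delta> \<le> y" "y \<le> x"
  shows "0 \<le> Gbeta \<beta> x - Gbeta \<beta> y \<and> Gbeta \<beta> x - Gbeta \<beta> y \<le> \<bar>\<beta>\<bar> * \<delta> powr (\<beta> - 1) * (x - y)"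
proof (cases "y = x")
  case False
  then have "y < x"
    using assms by simp
  then obtain z where z: "y < z" "z < x"
    and mvt: "Gbeta \<beta> x - Gbeta \<beta> y = (x - y) * (\<bar>\<beta>\<bar> * z powr (\<beta> - 1))"
    using MVT2[of y x "Gbeta \<beta>" "\<lambda>z. \<bar>\<beta>\<bar> * z powr (\<beta> - 1)"] Gbeta_has_real_derivative assms
    by force
  have "z powr (\<beta> - 1) \<le> \<delta> powr (\<beta> - 1)"
    using powr_mono2'[of "\<beta> - 1" \<delta> z] assms z by simp
  then have "\<bar>\<beta>\<bar> * z powr (\<beta> - 1) \<le> \<bar>\<beta>\<bar> * \<delta> powr (\<beta> - 1)"
    by (simp add: mult_left_mono)
  with mvt \<open>y < x\<close> show ?thesis
    by (simp add: mult_left_mono mult.commute)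
qed simp

lemma has_integral_mult_exp:
  fixes a c t :: real
  assumes "0 \<le> t" "a \<noteq> 0"
  shows "((\<lambda>s. c * exp (a * s)) has_integral c / a * (exp (a * t) - 1)) {0..t}"
proof -
  have "((\<lambda>s. c * exp (a * s)) has_integral c / a * exp (a * t) - c / a * exp (a * 0)) {0..t}"
  proof (rule fundamental_theorem_of_calculus[OF \<open>0 \<le> t\<close>])
    fix x :: real
    have "((\<lambda>s. c / a * exp (a * s)) has_real_derivative c / a * (exp (a * x) * a)) (at x within {0..t})"
      by (intro derivative_eq_intros) auto
    then show "((\<lambda>s. c / a * exp (a * s)) has_vector_derivative c * exp (a * x)) (at x within {0..t})"
      using assms by (simp add: has_real_derivative_iff_has_vector_derivative[symmetric])
  qed
  then show ?thesis
    by (simp add: algebra_simps)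
qed

lemma LIMSEQ_if_dist_le_geometric:
  fixes x :: "nat \<Rightarrow> real"
  assumes "\<bar>q\<bar> < 1" "\<And>n. \<bar>x n - y\<bar> \<le> A * q ^ n"
  shows "x \<longlonglongrightarrow> y"
proof -
  have "(\<lambda>n. A * q ^ n) \<longlonglongrightarrow> 0"
    using assms(1) by (intro tendsto_mult_right_zero LIMSEQ_power_zero) simp
  then have "(\<lambda>n. x n - y) \<longlonglongrightarrow> 0"
    by (rule Lim_null_comparison[OF always_eventually, rotated]) (use assms(2) in simp)
  then show ?thesis
    by (simp add: LIM_zero_iff)
qed

lemma linfty_plus_if_bounds:
  assumes "0 \<le> \<delta>" "\<And>k. \<delta> \<le> v k \<and> v k \<le> C"
  shows "linfty_plus v"
proof -
  have "\<bar>v k\<bar> \<le> C" for k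
    using assms(1) assms(2)[of k] by (simp add: abs_le_iff)
  moreover have "0 \<le> v k" for k
    using assms(1) assms(2)[of k] by simp
  ultimately show ?thesis
    unfolding linfty_plus_def bounded_real by blast
qed

lemma sup_norm_continuous_if_lipschitz_in_time:
  fixes u :: "real \<Rightarrow> 'a \<Rightarrow> real"
  assumes lip: "\<And>t t' k. 0 \<le> t \<Longrightarrow> 0 \<le> t' \<Longrightarrow> \<bar>u t k - u t' k\<bar> \<le> R * \<bar>t - t'\<bar>"
  shows "\<forall>t0\<ge>0. \<forall>e>0. \<exists>d>0. \<forall>t\<ge>0. \<bar>t - t0\<bar> < d \<longrightarrow> (\<forall>k. \<bar>u t k - u t0 k\<bar> \<le> e)"
proof (intro allI impI)
  fix t0 e :: real
  assume "0 \<le> t0" "0 < e"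
  show "\<exists>d>0. \<forall>t\<ge>0. \<bar>t - t0\<bar> < d \<longrightarrow> (\<forall>k. \<bar>u t k - u t0 k\<bar> \<le> e)"
  proof (intro exI[of _ "e / (\<bar>R\<bar> + 1)"] conjI allI impI)
    show "0 < e / (\<bar>R\<bar> + 1)"
      using \<open>0 < e\<close> by simp
    fix t k
    assume "0 \<le> t" and close: "\<bar>t - t0\<bar> < e / (\<bar>R\<bar> + 1)"
    have "\<bar>u t k - u t0 k\<bar> \<le> \<bar>R\<bar> * \<bar>t - t0\<bar>"
      using lip[OF \<open>0 \<le> t\<close> \<open>0 \<le> t0\<close>] by (meson abs_ge_self abs_ge_zero mult_right_mono order_trans)
    also have "\<dots> \<le> \<bar>R\<bar> * (e / (\<bar>R\<bar> + 1))"
      using close by (intro mult_left_mono) auto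
    also have "\<dots> \<le> e"
      using \<open>0 < e\<close> by (simp add: field_simps)
    finally show "\<bar>u t k - u t0 k\<bar> \<le> e" .
  qed
qed

lemma differentiable_on_continuous_deriv:
  assumes "\<And>t. t \<in> S \<Longrightarrow> (f has_real_derivative f' t) (at t)" "continuous_on S f'"
  shows "f differentiable_on S \<and> continuous_on S (deriv f)"
proof
  show "f differentiable_on S"
    using assms(1) by (intro differentiable_at_imp_differentiable_on) (auto simp: real_differentiable_def)
  show "continuous_on S (deriv f)"
    using assms(2) by (rule continuous_on_cong[THEN iffD1, rotated 2]) (auto intro!: sym[OF DERIV_imp_deriv] assms(1))
qed

locale picard_setting =
  fixes \<beta> \<delta> C :: real and u0 :: "int \<Rightarrow> real"
  assumes beta_nonzero: "\<beta> \<noteq> 0" and beta_le_1: "\<beta> \<le> 1" and delta_pos: "0 < \<delta>"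
    and u0_bounds: "\<And>k. \<delta> \<le> u0 k \<and> u0 k \<le> C"
begin

definition L :: real where "L = \<bar>\<beta>\<bar> * \<delta> powr (\<beta> - 1)"

definition M :: real where "M = 2 * L"

definition Phi :: "(int \<Rightarrow> real) \<Rightarrow> int \<Rightarrow> real" where
  "Phi v k = dlap (\<lambda>j. Gbeta \<beta> (v j)) k + M * v k"

definition duhamel :: "(real \<Rightarrow> int \<Rightarrow> real) \<Rightarrow> real \<Rightarrow> int \<Rightarrow> real" where
  "duhamel v t k = exp (- M * t) * (u0 k + integral {0..t} (\<lambda>s. exp (M * s) * Phi (v s) k))"

definition R :: real where "R = M * (C - \<delta>)"

definition admissible :: "(real \<Rightarrow> int \<Rightarrow> real) \<Rightarrow> bool" where
  "admissible v \<longleftrightarrow> (\<forall>t\<ge>0. \<forall>k. \<delta> \<le> v t k \<and> v t k \<le> C) \<and>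
   (\<forall>t\<ge>0. \<forall>t'\<ge>0. \<forall>k. \<bar>v t k - v t' k\<bar> \<le> R * \<bar>t - t'\<bar>)"

lemma L_pos: "0 < L"
  unfolding L_def using beta_nonzero delta_pos by simp

lemma M_pos: "0 < M"
  unfolding M_def using L_pos by simp

lemma delta_le_C: "\<delta> \<le> C"
  using u0_bounds order_trans by blast

lemma R_nonneg: "0 \<le> R"
  unfolding R_def using M_pos delta_le_C by simp

lemma Gbeta_lipschitz: "\<delta> \<le> y \<Longrightarrow> y \<le> x \<Longrightarrow> 0 \<le> Gbeta \<beta> x - Gbeta \<beta> y \<and> Gbeta \<beta> x - Gbeta \<beta> y \<le> L * (x - y)"
  unfolding L_def using Gbeta_mono_lipschitz beta_nonzero beta_le_1 delta_pos by blast

lemma Gbeta_abs_diff_le: "\<delta> \<le> a \<Longrightarrow> \<delta> \<le> c \<Longrightarrow> \<bar>Gbeta \<beta> a - Gbeta \<beta> c\<bar> \<le> L * \<bar>a - c\<bar>"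
  using Gbeta_lipschitz[of a c] Gbeta_lipschitz[of c a] by (cases "a \<le> c") (auto simp: abs_if algebra_simps)

lemma shifted_Gbeta_abs_diff_le: "\<delta> \<le> a \<Longrightarrow> \<delta> \<le> c \<Longrightarrow>
   \<bar>(M * a - 2 * Gbeta \<beta> a) - (M * c - 2 * Gbeta \<beta> c)\<bar> \<le> M * \<bar>a - c\<bar>"
  using Gbeta_lipschitz[of a c] Gbeta_lipschitz[of c a] unfolding M_def
  by (cases "a \<le> c") (auto simp: abs_if algebra_simps)

lemma Phi_eq: "Phi v k = Gbeta \<beta> (v (k - 1)) + Gbeta \<beta> (v (k + 1)) + (M * v k - 2 * Gbeta \<beta> (v k))"
  unfolding Phi_def dlap_def by simp

lemma Phi_bounds:
  assumes "\<And>j. \<delta> \<le> v j \<and> v j \<le> C"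
  shows "M * \<delta> \<le> Phi v k \<and> Phi v k \<le> M * C"
proof -
  have G: "Gbeta \<beta> \<delta> \<le> Gbeta \<beta> (v j) \<and> Gbeta \<beta> (v j) \<le> Gbeta \<beta> C" for j
    using Gbeta_lipschitz[of \<delta> "v j"] Gbeta_lipschitz[of "v j" C] assms by auto
  have "M * \<delta> - 2 * Gbeta \<beta> \<delta> \<le> M * v k - 2 * Gbeta \<beta> (v k)"
    and "M * v k - 2 * Gbeta \<beta> (v k) \<le> M * C - 2 * Gbeta \<beta> C"
    using Gbeta_lipschitz[of \<delta> "v k"] Gbeta_lipschitz[of "v k" C] assms
    unfolding M_def by (auto simp: algebra_simps)
  then show ?thesis
    unfolding Phi_eq using G[of "k - 1"] G[of "k + 1"] by linarith
qed

lemma Phi_lipschitz: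
  assumes "\<And>j. \<delta> \<le> v j" "\<And>j. \<delta> \<le> w j" "\<And>j. \<bar>v j - w j\<bar> \<le> b"
  shows "\<bar>Phi v k - Phi w k\<bar> \<le> 4 * L * b"
proof -
  have G: "\<bar>Gbeta \<beta> (v j) - Gbeta \<beta> (w j)\<bar> \<le> L * b" for j
    using Gbeta_abs_diff_le[of "v j" "w j"] assms L_pos by (meson order_trans mult_left_mono less_imp_le)
  have "\<bar>(M * v k - 2 * Gbeta \<beta> (v k)) - (M * w k - 2 * Gbeta \<beta> (w k))\<bar> \<le> M * b"
    using shifted_Gbeta_abs_diff_le[of "v k" "w k"] assms M_pos by (meson order_trans mult_left_mono less_imp_le)
  then show ?thesis
    unfolding Phi_eq M_def using G[of "k - 1"] G[of "k + 1"] by (simp add: abs_if split: if_splits; linarith)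
qed

lemma admissible_bounds: "admissible v \<Longrightarrow> 0 \<le> t \<Longrightarrow> \<delta> \<le> v t j \<and> v t j \<le> C"
  by (auto simp: admissible_def)

lemma admissible_continuous_on: "admissible v \<Longrightarrow> continuous_on {0..} (\<lambda>s. v s j)"
  by (rule lipschitz_on_continuous_on[of R])
    (auto simp: admissible_def lipschitz_on_def dist_real_def R_nonneg)

lemma Phi_continuous_on:
  assumes "admissible v"
  shows "continuous_on {0..} (\<lambda>s. Phi (v s) k)"
proof -
  have "continuous_on {0..} (\<lambda>s. Gbeta \<beta> (v s j))" for j
    by (rule continuous_on_compose2[OF continuous_on_Gbeta[OF beta_nonzero] admissible_continuous_on[OF assms]])
      (auto intro!: less_le_trans[OF delta_pos] conjunct1[OF admissible_bounds[OF assms]])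
  then show ?thesis
    unfolding Phi_eq by (intro continuous_intros admissible_continuous_on[OF assms])
qed

lemma weighted_Phi_continuous_on:
  "admissible v \<Longrightarrow> continuous_on {0..t} (\<lambda>s. exp (M * s) * Phi (v s) k)"
  by (intro continuous_intros continuous_on_subset[OF Phi_continuous_on]) auto

lemma weighted_Phi_integrable_on:
  "admissible v \<Longrightarrow> (\<lambda>s. exp (M * s) * Phi (v s) k) integrable_on {0..t}"
  by (rule integrable_continuous_interval[OF weighted_Phi_continuous_on])

lemma duhamel_at_0: "duhamel v 0 = u0"
  unfolding duhamel_def by auto

lemma integral_weighted_Phi_bounds:
  assumes "admissible v" "0 \<le> t"
  shows "\<delta> * (exp (M * t) - 1) \<le> integral {0..t} (\<lambda>s. exp (M * s) * Phi (v s) k)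
    \<and> integral {0..t} (\<lambda>s. exp (M * s) * Phi (v s) k) \<le> C * (exp (M * t) - 1)"
proof -
  let ?f = "\<lambda>s. exp (M * s) * Phi (v s) k"
  have f: "(?f has_integral integral {0..t} ?f) {0..t}"
    using weighted_Phi_integrable_on[OF assms(1)] by blast
  have bounds: "M * \<delta> * exp (M * s) \<le> ?f s \<and> ?f s \<le> M * C * exp (M * s)" if "s \<in> {0..t}" for s
    using Phi_bounds[of "v s" k] admissible_bounds[OF assms(1)] that by auto
  have "M * \<delta> / M * (exp (M * t) - 1) \<le> integral {0..t} ?f"
    by (rule has_integral_le[OF has_integral_mult_exp[OF assms(2)] f]) (use M_pos bounds in auto)
  moreover have "integral {0..t} ?f \<le> M * C / M * (exp (M * t) - 1)"
    by (rule has_integral_le[OF f has_integral_mult_exp[OF assms(2)]]) (use M_pos bounds in auto)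
  ultimately show ?thesis
    using M_pos by simp
qed

lemma duhamel_bounds:
  assumes "admissible v" "0 \<le> t"
  shows "\<delta> \<le> duhamel v t k \<and> duhamel v t k \<le> C"
proof -
  let ?I = "integral {0..t} (\<lambda>s. exp (M * s) * Phi (v s) k)"
  have inv: "exp (- M * t) * exp (M * t) = 1"
    by (simp add: exp_add[symmetric])
  have "exp (- M * t) * (\<delta> * exp (M * t)) \<le> exp (- M * t) * (u0 k + ?I)"
    and "exp (- M * t) * (u0 k + ?I) \<le> exp (- M * t) * (C * exp (M * t))"
    using integral_weighted_Phi_bounds[OF assms, of k] u0_bounds[of k]
    by (intro mult_left_mono; simp add: algebra_simps)+
  then show ?thesis
    unfolding duhamel_def using inv by (simp add: algebra_simps)
qed

lemma duhamel_has_derivative: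
  assumes "admissible v" "0 < t"
  shows "((\<lambda>s. duhamel v s k) has_real_derivative Phi (v t) k - M * duhamel v t k) (at t)"
proof -
  define f where "f s = exp (M * s) * Phi (v s) k" for s
  have "((\<lambda>s. integral {0..s} f) has_real_derivative f t) (at t within {0..t + 1})"
    unfolding f_def[abs_def] using assms
    by (intro integral_has_real_derivative weighted_Phi_continuous_on) auto
  then have I: "((\<lambda>s. integral {0..s} f) has_real_derivative f t) (at t)"
    using assms by (simp add: at_within_Icc_at)
  have "((\<lambda>s. exp (- M * s) * (u0 k + integral {0..s} f)) has_real_derivative
      exp (- M * t) * (- M) * (u0 k + integral {0..t} f) + exp (- M * t) * f t) (at t)"
    by (auto intro!: derivative_eq_intros I)
  moreover have "exp (- M * t) * f t = Phi (v t) k"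
    unfolding f_def by (simp add: exp_minus field_simps)
  ultimately show ?thesis
    unfolding duhamel_def f_def[symmetric] by (simp add: algebra_simps)
qed

lemma duhamel_continuous_on:
  assumes "admissible v"
  shows "continuous_on {0..b} (\<lambda>s. duhamel v s k)"
  unfolding duhamel_def
  by (intro continuous_intros indefinite_integral_continuous_1 weighted_Phi_integrable_on assms)

lemma duhamel_lipschitz:
  assumes "admissible v" "0 \<le> a" "a < b"
  shows "\<bar>duhamel v b k - duhamel v a k\<bar> \<le> R * (b - a)"
proof -
  have "continuous_on {a..b} (\<lambda>s. duhamel v s k)"
    by (rule continuous_on_subset[OF duhamel_continuous_on[OF assms(1)]]) (use assms in auto)
  moreover have "(\<lambda>s. duhamel v s k) differentiable (at x)" if "a < x" for x
    using duhamel_has_derivative[OF assms(1), of x] that assms(2) unfolding real_differentiable_def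
    by auto
  ultimately obtain l z where z: "a < z" "z < b" "((\<lambda>s. duhamel v s k) has_real_derivative l) (at z)"
    and mvt: "duhamel v b k - duhamel v a k = (b - a) * l"
    using MVT[OF assms(3)] by blast
  have "l = Phi (v z) k - M * duhamel v z k"
    using DERIV_unique[OF z(3) duhamel_has_derivative[OF assms(1)]] z assms by simp
  moreover have "M * \<delta> \<le> M * duhamel v z k" "M * duhamel v z k \<le> M * C"
    using duhamel_bounds[OF assms(1), of z k] M_pos z assms by simp_all
  moreover have "M * \<delta> \<le> Phi (v z) k" "Phi (v z) k \<le> M * C"
    using Phi_bounds[of "v z" k] admissible_bounds[OF assms(1), of z] z assms by simp_all
  ultimately have "\<bar>l\<bar> \<le> R"
    unfolding R_def right_diff_distrib by linarith
  then show ?thesis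
    using mvt assms(3) by (simp add: abs_mult mult.commute mult_right_mono)
qed

lemma duhamel_admissible:
  assumes "admissible v"
  shows "admissible (duhamel v)"
proof -
  have "\<bar>duhamel v t k - duhamel v t' k\<bar> \<le> R * \<bar>t - t'\<bar>" if "0 \<le> t" "0 \<le> t'" for t t' k
    using duhamel_lipschitz[OF assms that(1), of t' k] duhamel_lipschitz[OF assms that(2), of t k]
    by (cases t t' rule: linorder_cases) (auto simp: abs_minus_commute)
  then show ?thesis
    using duhamel_bounds[OF assms] unfolding admissible_def by blast
qed

text \<open>Phi is 4 L-Lipschitz, and in the norm weighted by exp(-rate t) the integrand of a difference
  of Duhamel maps grows like exp((M + rate) s); hence the contraction factor 4 L / (M + 4 L) = 2/3.\<close>
definition rate :: real where "rate = 4 * L"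

lemma weighted_Phi_diff_le:
  assumes "admissible v" "admissible w" "0 \<le> s"
    and "\<And>j. \<bar>v s j - w s j\<bar> \<le> b * exp (rate * s)"
  shows "\<bar>exp (M * s) * Phi (v s) k - exp (M * s) * Phi (w s) k\<bar> \<le> 4 * L * b * exp (6 * L * s)"
proof -
  have "\<bar>Phi (v s) k - Phi (w s) k\<bar> \<le> 4 * L * (b * exp (rate * s))"
    using assms admissible_bounds[OF assms(1)] admissible_bounds[OF assms(2)] by (intro Phi_lipschitz) auto
  then have "exp (M * s) * \<bar>Phi (v s) k - Phi (w s) k\<bar> \<le> exp (M * s) * (4 * L * (b * exp (rate * s)))"
    by (simp add: mult_left_mono)
  also have "\<dots> = 4 * L * b * exp (6 * L * s)"
    unfolding M_def rate_def by (simp add: exp_add[symmetric] algebra_simps)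
  finally show ?thesis
    by (simp add: abs_mult right_diff_distrib[symmetric])
qed

lemma duhamel_contraction:
  assumes "admissible v" "admissible w" "0 \<le> t" "0 \<le> b"
    and "\<And>s j. s \<in> {0..t} \<Longrightarrow> \<bar>v s j - w s j\<bar> \<le> b * exp (rate * s)"
  shows "\<bar>duhamel v t k - duhamel w t k\<bar> \<le> 2/3 * b * exp (rate * t)"
proof -
  let ?f = "\<lambda>s. exp (M * s) * Phi (v s) k" and ?g = "\<lambda>s. exp (M * s) * Phi (w s) k"
  have majorant: "((\<lambda>s. 4 * L * b * exp (6 * L * s)) has_integral
      4 * L * b / (6 * L) * (exp (6 * L * t) - 1)) {0..t}"
    using assms L_pos by (intro has_integral_mult_exp) auto
  have "norm (integral {0..t} (\<lambda>s. ?f s - ?g s))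
      \<le> integral {0..t} (\<lambda>s. 4 * L * b * exp (6 * L * s))"
    using majorant weighted_Phi_diff_le[OF assms(1,2)] assms(5)
      weighted_Phi_integrable_on[OF assms(1)] weighted_Phi_integrable_on[OF assms(2)]
    by (intro integral_norm_bound_integral integrable_diff) auto
  also have "\<dots> = 2/3 * b * (exp (6 * L * t) - 1)"
    using integral_unique[OF majorant] L_pos by simp
  finally have "\<bar>integral {0..t} ?f - integral {0..t} ?g\<bar> \<le> 2/3 * b * (exp (6 * L * t) - 1)"
    using integral_diff[OF weighted_Phi_integrable_on[OF assms(1)] weighted_Phi_integrable_on[OF assms(2)]]
    by simp
  then have "\<bar>duhamel v t k - duhamel w t k\<bar> \<le> exp (- M * t) * (2/3 * b * (exp (6 * L * t) - 1))"
    unfolding duhamel_def by (simp add: abs_mult right_diff_distrib[symmetric] mult_left_mono)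
  also have "\<dots> \<le> exp (- M * t) * (2/3 * b * exp (6 * L * t))"
    using assms by (intro mult_left_mono) auto
  also have "\<dots> = 2/3 * b * exp (rate * t)"
    unfolding M_def rate_def by (simp add: exp_add[symmetric] algebra_simps)
  finally show ?thesis .
qed

definition picard :: "nat \<Rightarrow> real \<Rightarrow> int \<Rightarrow> real" where "picard n = (duhamel ^^ n) (\<lambda>t. u0)"

lemma picard_0: "picard 0 = (\<lambda>t. u0)"
  by (simp add: picard_def)

lemma picard_Suc: "picard (Suc n) = duhamel (picard n)"
  by (simp add: picard_def)

lemma picard_admissible: "admissible (picard n)"
proof (induction n)
  case 0
  show ?case
    unfolding picard_0 admissible_def using u0_bounds R_nonneg by auto
next
  case (Suc n)
  then show ?case
    unfolding picard_Suc by (rule duhamel_admissible)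
qed

lemma picard_at_0: "picard n 0 = u0"
  by (cases n) (simp_all add: picard_0 picard_Suc duhamel_at_0)

lemma picard_step_le:
  "0 \<le> t \<Longrightarrow> \<bar>picard (Suc n) t k - picard n t k\<bar> \<le> (C - \<delta>) * (2/3)^n * exp (rate * t)"
proof (induction n arbitrary: t k)
  case 0
  have "\<bar>picard (Suc 0) t k - picard 0 t k\<bar> \<le> (C - \<delta>) * 1"
    using admissible_bounds[OF picard_admissible 0, of "Suc 0" k] admissible_bounds[OF picard_admissible 0, of 0 k]
    by (simp add: abs_le_iff)
  also have "\<dots> \<le> (C - \<delta>) * exp (rate * t)"
    using delta_le_C L_pos 0 unfolding rate_def by (intro mult_left_mono) auto
  finally show ?case
    by simp
next
  case (Suc n)
  have "\<bar>duhamel (picard (Suc n)) t k - duhamel (picard n) t k\<bar> \<le> 2/3 * ((C - \<delta>) * (2/3)^n) * exp (rate * t)"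
    using Suc delta_le_C by (intro duhamel_contraction picard_admissible) (auto simp: picard_Suc)
  then show ?case
    by (simp add: picard_Suc[of "Suc n"] picard_Suc[of n] algebra_simps)
qed

definition picard_limit :: "real \<Rightarrow> int \<Rightarrow> real" where
  "picard_limit t k = u0 k + (\<Sum>i. picard (Suc i) t k - picard i t k)"

lemma picard_limit_dist:
  assumes "0 \<le> t"
  shows "\<bar>picard_limit t k - picard n t k\<bar> \<le> 3 * (C - \<delta>) * exp (rate * t) * (2/3)^n"
proof -
  define d where "d i = picard (Suc i) t k - picard i t k" for i
  define c where "c = (C - \<delta>) * exp (rate * t)"
  have d_le: "\<bar>d i\<bar> \<le> c * (2/3)^i" for i
    unfolding d_def c_def using picard_step_le[OF assms] by (simp add: algebra_simps)
  have summable: "summable d"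
    by (rule summable_comparison_test'[of "\<lambda>i. c * (2/3)^i"]) (use d_le in \<open>auto intro: summable_mult summable_geometric\<close>)
  have "picard n t k = u0 k + sum d {..<n}"
    using sum_lessThan_telescope[of "\<lambda>i. picard i t k" n] unfolding d_def picard_0 by simp
  then have "\<bar>picard_limit t k - picard n t k\<bar> = norm (\<Sum>i. d (i + n))"
    unfolding picard_limit_def d_def[symmetric] using suminf_split_initial_segment[OF summable, of n] by simp
  also have "\<dots> \<le> (\<Sum>i. c * (2/3)^n * (2/3)^i)"
  proof (rule norm_suminf_le)
    show "norm (d (i + n)) \<le> c * (2/3)^n * (2/3)^i" for i
      using d_le[of "i + n"] by (simp add: power_add algebra_simps)
  qed (intro summable_mult summable_geometric, simp)
  also have "\<dots> = c * (2/3)^n * 3"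
    using suminf_geometric[of "2/3 :: real"] by (simp add: suminf_mult)
  finally show ?thesis
    unfolding c_def by (simp add: algebra_simps)
qed

lemma picard_tendsto:
  assumes "0 \<le> t"
  shows "(\<lambda>n. picard n t k) \<longlonglongrightarrow> picard_limit t k"
proof (rule LIMSEQ_if_dist_le_geometric[where q = "2/3" and A = "3 * (C - \<delta>) * exp (rate * t)"])
  show "\<bar>picard n t k - picard_limit t k\<bar> \<le> 3 * (C - \<delta>) * exp (rate * t) * (2/3)^n" for n
    using picard_limit_dist[OF assms] by (simp add: abs_minus_commute)
qed simp

lemma picard_limit_admissible: "admissible picard_limit"
  unfolding admissible_def
proof (intro conjI allI impI)
  fix t t' :: real and k
  assume "0 \<le> t"
  note bounds = admissible_bounds[OF picard_admissible \<open>0 \<le> t\<close>]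
  show "\<delta> \<le> picard_limit t k"
    using bounds by (intro LIMSEQ_le_const[OF picard_tendsto[OF \<open>0 \<le> t\<close>]]) blast
  show "picard_limit t k \<le> C"
    using bounds by (intro LIMSEQ_le_const2[OF picard_tendsto[OF \<open>0 \<le> t\<close>]]) blast
  assume "0 \<le> t'"
  have "(\<lambda>n. \<bar>picard n t k - picard n t' k\<bar>) \<longlonglongrightarrow> \<bar>picard_limit t k - picard_limit t' k\<bar>"
    using \<open>0 \<le> t\<close> \<open>0 \<le> t'\<close> by (intro tendsto_intros picard_tendsto)
  then show "\<bar>picard_limit t k - picard_limit t' k\<bar> \<le> R * \<bar>t - t'\<bar>"
    using picard_admissible \<open>0 \<le> t\<close> \<open>0 \<le> t'\<close> unfolding admissible_def
    by (intro LIMSEQ_le_const2) blast+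
qed

lemma picard_limit_fixed_point:
  assumes "0 \<le> t"
  shows "duhamel picard_limit t k = picard_limit t k"
proof (rule LIMSEQ_unique)
  show "(\<lambda>n. picard (Suc n) t k) \<longlonglongrightarrow> picard_limit t k"
    by (rule LIMSEQ_Suc[OF picard_tendsto[OF assms]])
  have "\<bar>picard (Suc n) t k - duhamel picard_limit t k\<bar> \<le> 2 * (C - \<delta>) * exp (rate * t) * (2/3)^n" for n
  proof -
    have "\<bar>duhamel picard_limit t k - duhamel (picard n) t k\<bar> \<le> 2/3 * (3 * (C - \<delta>) * (2/3)^n) * exp (rate * t)"
      using assms delta_le_C picard_limit_dist
      by (intro duhamel_contraction picard_limit_admissible picard_admissible) (auto simp: algebra_simps)
    then show ?thesis
      by (simp add: picard_Suc abs_minus_commute algebra_simps)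
  qed
  then show "(\<lambda>n. picard (Suc n) t k) \<longlonglongrightarrow> duhamel picard_limit t k"
    by (rule LIMSEQ_if_dist_le_geometric[of "2/3", rotated]) simp
qed

lemma picard_limit_at_0: "picard_limit 0 = u0"
  by (rule ext) (simp add: picard_limit_def picard_at_0)

lemma picard_limit_has_derivative:
  assumes "0 < t"
  shows "((\<lambda>s. picard_limit s k) has_real_derivative dlap (\<lambda>j. Gbeta \<beta> (picard_limit t j)) k) (at t)"
proof -
  have "((\<lambda>s. duhamel picard_limit s k) has_real_derivative Phi (picard_limit t) k - M * picard_limit t k) (at t)"
    using duhamel_has_derivative[OF picard_limit_admissible assms, of k] assms
    by (simp add: picard_limit_fixed_point)
  then have "((\<lambda>s. picard_limit s k) has_real_derivative Phi (picard_limit t) k - M * picard_limit t k) (at t)"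
    by (rule has_field_derivative_transform_within_open[of _ _ t "{0<..}"])
      (use assms in \<open>auto simp: picard_limit_fixed_point\<close>)
  then show ?thesis
    by (simp add: Phi_def)
qed

lemma continuous_on_dlap_picard_limit:
  "continuous_on {0<..} (\<lambda>t. dlap (\<lambda>j. Gbeta \<beta> (picard_limit t j)) k)"
proof -
  have "continuous_on {0..} (\<lambda>t. Phi (picard_limit t) k - M * picard_limit t k)"
    by (intro continuous_intros Phi_continuous_on admissible_continuous_on picard_limit_admissible)
  then have "continuous_on {0<..} (\<lambda>t. Phi (picard_limit t) k - M * picard_limit t k)"
    by (rule continuous_on_subset) auto
  then show ?thesis
    by (simp add: Phi_def)
qed

end

theorem corollaryA5:
  fixes \<beta> \<delta> C :: real and u0 :: "int \<Rightarrow> real"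
  assumes "\<beta> \<noteq> 0" and "\<beta> \<le> 1"
    and "linfty_plus u0"
    and "0 < \<delta>" and "\<forall>k. \<delta> \<le> u0 k \<and> u0 k \<le> C"
  shows "\<exists>u. is_solution \<beta> u0 u \<and> (\<forall>t\<ge>0. \<forall>k. \<delta> \<le> u t k \<and> u t k \<le> C)"
proof -
  interpret picard_setting \<beta> \<delta> C u0
    using assms by unfold_locales auto
  have bounds: "\<forall>t\<ge>0. \<forall>k. \<delta> \<le> picard_limit t k \<and> picard_limit t k \<le> C"
    using admissible_bounds[OF picard_limit_admissible] by blast
  have linfty: "\<forall>t\<ge>0. linfty_plus (picard_limit t)"
    using bounds \<open>0 < \<delta>\<close> by (blast intro: linfty_plus_if_bounds[OF less_imp_le])
  have continuous:
    "\<forall>t0\<ge>0. \<forall>e>0. \<exists>d>0. \<forall>t\<ge>0. \<bar>t - t0\<bar> < d \<longrightarrow> (\<forall>k. \<bar>picard_limit t k - picard_limit t0 k\<bar> \<le> e)"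
    by (rule sup_norm_continuous_if_lipschitz_in_time[where R = R])
      (use picard_limit_admissible in \<open>simp add: admissible_def\<close>)
  have positive: "\<forall>t>0. 0 < picard_limit t k" for k
    using bounds \<open>0 < \<delta>\<close> by (auto intro: less_le_trans)
  have C1: "(\<lambda>s. picard_limit s k) differentiable_on {0<..} \<and>
      continuous_on {0<..} (deriv (\<lambda>s. picard_limit s k))" for k
    by (rule differentiable_on_continuous_deriv[OF _ continuous_on_dlap_picard_limit[of k]])
      (simp add: picard_limit_has_derivative)
  have "is_solution \<beta> u0 picard_limit"
    unfolding is_solution_def
    by (intro conjI linfty continuous picard_limit_at_0) (simp add: positive C1 picard_limit_has_derivative)
  with bounds show ?thesis
    by blast
qed

end
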